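(* (i) Let $h:\omega\to\omega\setminus\{0,1\}$ be nondecreasing and $g(n)=h(2n)$. Then $\mathfrak d(\neq^*,h)=\mathfrak d(\neq^*,g)$ and $\mathfrak b(\neq^*,h)=\mathfrak b(\neq^*,g)$. (ii) For all real numbers $a,b>1$, $\mathfrak d(\neq^*,n\mapsto2^{(a^n)})=\mathfrak d(\neq^*,n\mapsto2^{(b^n)})$ and $\mathfrak b(\neq^*,n\mapsto2^{(a^n)})=\mathfrak b(\neq^*,n\mapsto2^{(b^n)})$.
   Context: For a function $h$, a function $y:\omega\to\omega$ is $h$-bounded if $y(n)<h(n)$ for all $n$. $\mathfrak d(\neq^*,h)$ is the least cardinality of a set $G$ of $h$-bounded functions such that for every $x\in{}^\omega\omega$ there is $y\in G$ with $x(n)\neq y(n)$ for all but finitely many $n$. $\mathfrak b(\neq^*,h)$ is the least cardinality of a set $F\subseteq{}^\omega\omega$ such that for every $h$-bounded $y$ there is $x\in F$ with $x(n)=y(n)$ for infinitely many $n$. The statements are theorems of ZFC. *)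

theory Defs
  imports Complex_Main
begin

definition h_bounded :: "(nat \<Rightarrow> nat) \<Rightarrow> (nat \<Rightarrow> nat) \<Rightarrow> bool" where
  "h_bounded h y \<longleftrightarrow> (\<forall>n. y n < h n)"

definition neq_ae :: "(nat \<Rightarrow> nat) \<Rightarrow> (nat \<Rightarrow> nat) \<Rightarrow> bool" where
  "neq_ae x y \<longleftrightarrow> finite {n. x n = y n}"

definition d_family :: "(nat \<Rightarrow> nat) \<Rightarrow> (nat \<Rightarrow> nat) set \<Rightarrow> bool" where
  "d_family h G \<longleftrightarrow> (\<forall>y\<in>G. h_bounded h y) \<and> (\<forall>x. \<exists>y\<in>G. neq_ae x y)"

definition b_family :: "(nat \<Rightarrow> nat) \<Rightarrow> (nat \<Rightarrow> nat) set \<Rightarrow> bool" where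
  "b_family h F \<longleftrightarrow> (\<forall>y. h_bounded h y \<longrightarrow> (\<exists>x\<in>F. infinite {n. x n = y n}))"

text \<open>d(neq*,h) \<le> d(neq*,g): every witness family for g is matched in cardinality
  by a witness family for h of no larger cardinality (comparison of least cardinalities).\<close>
definition d_le :: "(nat \<Rightarrow> nat) \<Rightarrow> (nat \<Rightarrow> nat) \<Rightarrow> bool" where
  "d_le h g \<longleftrightarrow> (\<forall>G. d_family g G \<longrightarrow>
      (\<exists>G'. d_family h G' \<and> (card_of G', card_of G) \<in> ordLeq))"

definition b_le :: "(nat \<Rightarrow> nat) \<Rightarrow> (nat \<Rightarrow> nat) \<Rightarrow> bool" where
  "b_le h g \<longleftrightarrow> (\<forall>F. b_family g F \<longrightarrow>
      (\<exists>F'. b_family h F' \<and> (card_of F', card_of F) \<in> ordLeq))"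

definition d_eq :: "(nat \<Rightarrow> nat) \<Rightarrow> (nat \<Rightarrow> nat) \<Rightarrow> bool" where
  "d_eq h g \<longleftrightarrow> d_le h g \<and> d_le g h"

definition b_eq :: "(nat \<Rightarrow> nat) \<Rightarrow> (nat \<Rightarrow> nat) \<Rightarrow> bool" where
  "b_eq h g \<longleftrightarrow> b_le h g \<and> b_le g h"

text \<open>The natural-number bound equivalent to the real bound 2^(a^n):
  for natural y, y < 2 powr (a^n) iff y < ceiling (2 powr (a^n)).\<close>
definition dexp :: "real \<Rightarrow> nat \<Rightarrow> nat" where
  "dexp a n = nat \<lceil>2 powr (a ^ n)\<rceil>"

end

theory Submission
  imports Defs
begin

text \<open>Enlarging the bound can only decrease d(\<noteq>*,h) and increase b(\<noteq>*,h), so h \<le> h(2\<cdot>)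
  gives one inequality each. For the others, code a function on \<omega> by its even and odd halves:
  because h is nondecreasing, two h(2\<cdot>)-bounded functions interleave to an h-bounded one.
  Interleaving the pairs from a d-family G for h(2\<cdot>) gives a d-family for h, and the halves of
  the members of a b-family F for h form a b-family for h(2\<cdot>). Such families are infinite, so
  passing to G \<times> G or to two copies of F does not increase the cardinality. (Infinity of F
  needs h unbounded; a bounded nondecreasing h is eventually constant, so h(2\<cdot>) is eventually
  equal to h.) Iterating the doubling reaches h(2^k \<cdot>), and 2^(b^n) \<le> 2^(a^(2^k n)) as soon as
  b < a^k.\<close>

lemma d_le_refl: "d_le h h"
  unfolding d_le_def using card_of_mono1 by blast

lemma d_le_trans: "d_le h g \<Longrightarrow> d_le g k \<Longrightarrow> d_le h k"
  unfolding d_le_def by (meson ordLeq_transitive)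

lemma b_le_refl: "b_le h h"
  unfolding b_le_def using card_of_mono1 by blast

lemma b_le_trans: "b_le h g \<Longrightarrow> b_le g k \<Longrightarrow> b_le h k"
  unfolding b_le_def by (meson ordLeq_transitive)

lemma d_le_mono_bound:
  assumes "\<And>n. h n \<le> h' n"
  shows "d_le h' h"
  unfolding d_le_def
proof (intro allI impI)
  fix G assume "d_family h G"
  then have "d_family h' G"
    using assms unfolding d_family_def h_bounded_def by (meson less_le_trans)
  then show "\<exists>G'. d_family h' G' \<and> (card_of G', card_of G) \<in> ordLeq"
    using card_of_mono1 by blast
qed

lemma b_le_mono_bound:
  assumes "\<And>n. h n \<le> h' n"
  shows "b_le h h'"
  unfolding b_le_def
proof (intro allI impI)
  fix F assume "b_family h' F"
  then have "b_family h F"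
    using assms unfolding b_family_def h_bounded_def by (meson less_le_trans)
  then show "\<exists>F'. b_family h F' \<and> (card_of F', card_of F) \<in> ordLeq"
    using card_of_mono1 by blast
qed

definition interleave :: "(nat \<Rightarrow> 'a) \<Rightarrow> (nat \<Rightarrow> 'a) \<Rightarrow> nat \<Rightarrow> 'a" where
  "interleave y z k = (if even k then y (k div 2) else z (k div 2))"

lemma agree_interleave_eq:
  "{k. x k = interleave y z k} =
     (\<lambda>n. 2 * n) ` {n. x (2 * n) = y n} \<union> (\<lambda>n. 2 * n + 1) ` {n. x (2 * n + 1) = z n}"
proof (intro equalityI subsetI)
  fix k assume "k \<in> {k. x k = interleave y z k}"
  then show "k \<in> (\<lambda>n. 2 * n) ` {n. x (2 * n) = y n} \<union> (\<lambda>n. 2 * n + 1) ` {n. x (2 * n + 1) = z n}"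
    by (cases "even k") (auto simp: interleave_def elim!: evenE oddE)
qed (auto simp: interleave_def)

lemma finite_agree_interleave_iff:
  "finite {k. x k = interleave y z k} \<longleftrightarrow>
     finite {n. x (2 * n) = y n} \<and> finite {n. x (2 * n + 1) = z n}"
proof -
  have "inj (\<lambda>n::nat. 2 * n)" "inj (\<lambda>n::nat. 2 * n + 1)"
    by (auto simp: inj_def)
  then show ?thesis
    unfolding agree_interleave_eq by (simp add: finite_image_iff inj_on_subset)
qed

lemma h_bounded_interleave:
  assumes "mono h" "h_bounded (\<lambda>n. h (2 * n)) y" "h_bounded (\<lambda>n. h (2 * n)) z"
  shows "h_bounded h (interleave y z)"
  unfolding h_bounded_def
proof
  fix k
  have "h (2 * (k div 2)) \<le> h k"
    using \<open>mono h\<close> by (simp add: monoD)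
  moreover have "y (k div 2) < h (2 * (k div 2))" "z (k div 2) < h (2 * (k div 2))"
    using assms(2,3) unfolding h_bounded_def by blast+
  ultimately show "interleave y z k < h k"
    unfolding interleave_def by auto
qed

lemma d_family_infinite:
  assumes "d_family h G"
  shows "infinite G"
proof
  assume "finite G"
  then obtain m and f :: "nat \<Rightarrow> nat \<Rightarrow> nat" where G: "G = f ` {..<m}"
    by (metis finite_imp_nat_seg_image_inj_on lessThan_def)
  have "G \<noteq> {}"
    using assms unfolding d_family_def by blast
  then have "m > 0"
    using G by auto
  \<comment> \<open>diagonalise: x agrees with the i-th member of G on the residue class of i mod m\<close>
  define x where "x n = f (n mod m) n" for n
  obtain y where "y \<in> G" "neq_ae x y"
    using assms unfolding d_family_def by blast
  then obtain i where "i < m" "y = f i"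
    using G by auto
  then have "range (\<lambda>j. i + m * j) \<subseteq> {n. x n = y n}"
    by (auto simp: x_def)
  moreover have "infinite (range (\<lambda>j. i + m * j))"
  proof -
    have "inj (\<lambda>j. i + m * j)"
      using \<open>m > 0\<close> by (auto simp: inj_def)
    then show ?thesis
      using finite_imageD infinite_UNIV_nat by blast
  qed
  ultimately show False
    using \<open>neq_ae x y\<close> unfolding neq_ae_def by (meson finite_subset)
qed

lemma b_family_infinite:
  assumes F: "b_family h F" and "mono h" and pos: "\<And>n. h n > 0"
    and unbounded: "\<And>m. \<exists>N. m < h N"
  shows "infinite F"
proof
  assume fin: "finite F"
  obtain N where N: "card F < h N"
    using unbounded by blast
  have avoid: "\<exists>v\<le>card F. v \<notin> (\<lambda>x. x n) ` F" for n
  proof (rule ccontr)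
    assume "\<not> ?thesis"
    then have "card {..card F} \<le> card ((\<lambda>x. x n) ` F)"
      using fin by (intro card_mono) auto
    also have "\<dots> \<le> card F"
      using fin by (rule card_image_le)
    finally show False by simp
  qed
  define y where "y n = (if n < N then 0 else LEAST v. v \<notin> (\<lambda>x. x n) ` F)" for n
  have "h_bounded h y"
    unfolding h_bounded_def
  proof
    fix n
    show "y n < h n"
    proof (cases "n < N")
      case False
      obtain v where "v \<le> card F" "v \<notin> (\<lambda>x. x n) ` F"
        using avoid by blast
      then have "y n \<le> card F"
        using False unfolding y_def by (metis (mono_tags, lifting) Least_le le_trans)
      moreover have "h N \<le> h n"
        using False \<open>mono h\<close> by (simp add: monoD)
      ultimately show ?thesis
        using N by linarith
    qed (use pos in \<open>simp add: y_def\<close>)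
  qed
  then obtain x where "x \<in> F" "infinite {n. x n = y n}"
    using F unfolding b_family_def by blast
  moreover have "{n. x n = y n} \<subseteq> {..<N}"
  proof
    fix n assume "n \<in> {n. x n = y n}"
    moreover have "n \<ge> N \<Longrightarrow> y n \<notin> (\<lambda>x. x n) ` F"
      using avoid[of n] unfolding y_def by (metis (mono_tags, lifting) LeastI not_le)
    ultimately show "n \<in> {..<N}"
      using \<open>x \<in> F\<close> by (metis (mono_tags) image_eqI lessThan_iff mem_Collect_eq not_le)
  qed
  ultimately show False
    using finite_subset by blast
qed

lemma mono_bounded_eventually_const:
  fixes h :: "nat \<Rightarrow> nat"
  assumes "mono h" and "\<And>n. h n \<le> m"
  obtains N where "\<And>n. N \<le> n \<Longrightarrow> h n = h N"
proof -
  have fin: "finite (range h)"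
    using assms(2) by (intro finite_subset[OF _ finite_atMost[of m]]) auto
  then obtain N where N: "h N = Max (range h)"
    using Max_in by fastforce
  have "h n = h N" if "N \<le> n" for n
  proof (rule antisym)
    show "h n \<le> h N"
      unfolding N using fin by simp
  qed (use monoD[OF \<open>mono h\<close> that] in simp)
  then show thesis using that by blast
qed

lemma b_family_eventually_le:
  assumes F: "b_family h F" and le: "\<And>n. N \<le> n \<Longrightarrow> h' n \<le> h n" and pos: "\<And>n. h n > 0"
  shows "b_family h' F"
  unfolding b_family_def
proof (intro allI impI)
  fix y assume y: "h_bounded h' y"
  define z where "z n = (if n < N then 0 else y n)" for n
  have "z n < h n" for n
  proof (cases "n < N")
    case False
    then have "y n < h n"
      using y le[of n] unfolding h_bounded_def by (metis not_le order_less_le_trans)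
    then show ?thesis
      using False by (simp add: z_def)
  qed (simp add: z_def pos)
  then have "h_bounded h z"
    unfolding h_bounded_def by blast
  then obtain x where "x \<in> F" "infinite {n. x n = z n}"
    using F unfolding b_family_def by blast
  moreover have "{n. x n = z n} \<subseteq> {n. x n = y n} \<union> {..<N}"
    by (auto simp: z_def)
  ultimately show "\<exists>x\<in>F. infinite {n. x n = y n}"
    by (meson finite_Un finite_lessThan finite_subset)
qed

lemma d_le_double:
  assumes "mono h"
  shows "d_le h (\<lambda>n. h (2 * n))"
  unfolding d_le_def
proof (intro allI impI)
  fix G assume G: "d_family (\<lambda>n. h (2 * n)) G"
  define G' where "G' = case_prod interleave ` (G \<times> G)"
  have "d_family h G'"
    unfolding d_family_def
  proof (intro conjI ballI allI)
    fix z assume "z \<in> G'"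
    then show "h_bounded h z"
      using G h_bounded_interleave[OF \<open>mono h\<close>] unfolding G'_def d_family_def by auto
  next
    fix x :: "nat \<Rightarrow> nat"
    obtain y where "y \<in> G" "neq_ae (\<lambda>n. x (2 * n)) y"
      using G unfolding d_family_def by blast
    moreover obtain z where "z \<in> G" "neq_ae (\<lambda>n. x (2 * n + 1)) z"
      using G unfolding d_family_def by blast
    ultimately have "interleave y z \<in> G'" "neq_ae x (interleave y z)"
      unfolding G'_def neq_ae_def finite_agree_interleave_iff by auto
    then show "\<exists>y\<in>G'. neq_ae x y" by blast
  qed
  moreover have "(card_of G', card_of G) \<in> ordLeq"
  proof -
    have "(card_of G', card_of (G \<times> G)) \<in> ordLeq"
      unfolding G'_def by (rule card_of_image)
    moreover have "(card_of (G \<times> G), card_of G) \<in> ordIso"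
      using card_of_Times_same_infinite d_family_infinite[OF G] by blast
    ultimately show ?thesis
      using ordLeq_ordIso_trans by blast
  qed
  ultimately show "\<exists>G'. d_family h G' \<and> (card_of G', card_of G) \<in> ordLeq"
    by blast
qed

lemma b_family_halves:
  assumes F: "b_family h F" and "mono h"
  shows "b_family (\<lambda>n. h (2 * n)) ((\<lambda>x n. x (2 * n)) ` F \<union> (\<lambda>x n. x (2 * n + 1)) ` F)"
  unfolding b_family_def
proof (intro allI impI)
  fix y assume "h_bounded (\<lambda>n. h (2 * n)) y"
  then have "h_bounded h (interleave y y)"
    using h_bounded_interleave[OF \<open>mono h\<close>] by blast
  then obtain x where "x \<in> F" "infinite {k. x k = interleave y y k}"
    using F unfolding b_family_def by blast
  then have "infinite {n. x (2 * n) = y n} \<or> infinite {n. x (2 * n + 1) = y n}"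
    unfolding finite_agree_interleave_iff by blast
  then show "\<exists>x'\<in>(\<lambda>x n. x (2 * n)) ` F \<union> (\<lambda>x n. x (2 * n + 1)) ` F. infinite {n. x' n = y n}"
    using \<open>x \<in> F\<close> by force
qed

lemma b_le_double:
  assumes "mono h" and pos: "\<And>n. h n > 0"
  shows "b_le (\<lambda>n. h (2 * n)) h"
  unfolding b_le_def
proof (intro allI impI)
  fix F assume F: "b_family h F"
  show "\<exists>F'. b_family (\<lambda>n. h (2 * n)) F' \<and> (card_of F', card_of F) \<in> ordLeq"
  proof (cases "\<forall>m. \<exists>N. m < h N")
    case False
    then obtain m where "\<And>n. h n \<le> m"
      by (meson not_le)
    then obtain N where N: "\<And>n. N \<le> n \<Longrightarrow> h n = h N"
      using mono_bounded_eventually_const[OF \<open>mono h\<close>] by blast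
    have "h (2 * n) \<le> h n" if "N \<le> n" for n
      using N[OF that] N[of "2 * n"] that by simp
    then have "b_family (\<lambda>n. h (2 * n)) F"
      by (rule b_family_eventually_le[OF F _ pos])
    then show ?thesis
      using card_of_mono1 by blast
  next
    case True
    then have "infinite F"
      using b_family_infinite[OF F \<open>mono h\<close> pos] by blast
    have "(card_of ((\<lambda>x n. x (2 * n)) ` F \<union> (\<lambda>x n. x (2 * n + 1)) ` F), card_of F) \<in> ordLeq"
      by (rule card_of_Un_ordLeq_infinite_Field)
        (use \<open>infinite F\<close> in \<open>auto simp: Field_card_of card_of_image card_of_card_order_on\<close>)
    then show ?thesis
      using b_family_halves[OF F \<open>mono h\<close>] by blast
  qed
qed

lemma le_double_power:
  assumes "mono h" and pos: "\<And>n. h n > 0"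
  shows "d_le h (\<lambda>n. h (2 ^ k * n)) \<and> b_le (\<lambda>n. h (2 ^ k * n)) h"
proof (induction k)
  case 0
  show ?case using d_le_refl b_le_refl by simp
next
  case (Suc k)
  have "mono (\<lambda>n. h (2 ^ k * n))"
    using \<open>mono h\<close> unfolding mono_def by simp
  moreover have "(\<lambda>n. h (2 ^ k * (2 * n))) = (\<lambda>n. h (2 ^ Suc k * n))"
    by (simp add: ac_simps)
  ultimately have "d_le (\<lambda>n. h (2 ^ k * n)) (\<lambda>n. h (2 ^ Suc k * n))"
    and "b_le (\<lambda>n. h (2 ^ Suc k * n)) (\<lambda>n. h (2 ^ k * n))"
    using d_le_double[of "\<lambda>n. h (2 ^ k * n)"] b_le_double[of "\<lambda>n. h (2 ^ k * n)"] pos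
    by auto
  then show ?case
    using Suc.IH d_le_trans b_le_trans by blast
qed

lemma dexp_mono:
  assumes "a \<ge> 1"
  shows "mono (dexp a)"
proof
  fix n m :: nat assume "n \<le> m"
  then have "2 powr (a ^ n) \<le> 2 powr (a ^ m)"
    using assms by (intro powr_mono power_increasing) auto
  then show "dexp a n \<le> dexp a m"
    unfolding dexp_def by (intro nat_mono ceiling_mono)
qed

lemma dexp_pos: "dexp a n > 0"
  unfolding dexp_def by simp

lemma dexp_dominated:
  assumes "a > 1" "b \<ge> 0"
  obtains k where "\<And>n. dexp b n \<le> dexp a (2 ^ k * n)"
proof -
  obtain k where "b < a ^ k"
    using real_arch_pow[OF \<open>a > 1\<close>] by blast
  also have "\<dots> \<le> a ^ 2 ^ k"
    using \<open>a > 1\<close> by (intro power_increasing) (auto intro: less_imp_le)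
  finally have "b \<le> a ^ 2 ^ k" by simp
  then have "2 powr (b ^ n) \<le> 2 powr (a ^ (2 ^ k * n))" for n
    using \<open>b \<ge> 0\<close> by (intro powr_mono) (auto simp: power_mult intro: power_mono)
  then have "dexp b n \<le> dexp a (2 ^ k * n)" for n
    unfolding dexp_def by (intro nat_mono ceiling_mono)
  then show thesis using that by blast
qed

lemma dexp_le:
  assumes "a > 1" "b \<ge> 0"
  shows "d_le (dexp a) (dexp b) \<and> b_le (dexp b) (dexp a)"
proof -
  obtain k where k: "\<And>n. dexp b n \<le> dexp a (2 ^ k * n)"
    using dexp_dominated[OF assms] by blast
  have "d_le (dexp a) (\<lambda>n. dexp a (2 ^ k * n))" "b_le (\<lambda>n. dexp a (2 ^ k * n)) (dexp a)"
    using le_double_power[of "dexp a" k] dexp_mono[of a] dexp_pos[of a] \<open>a > 1\<close> by auto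
  moreover have "d_le (\<lambda>n. dexp a (2 ^ k * n)) (dexp b)"
    using k by (rule d_le_mono_bound)
  moreover have "b_le (dexp b) (\<lambda>n. dexp a (2 ^ k * n))"
    using k by (rule b_le_mono_bound)
  ultimately show ?thesis
    using d_le_trans b_le_trans by blast
qed

theorem mainTheorem7:
  shows "(\<forall>h :: nat \<Rightarrow> nat. (\<forall>n. h n \<ge> 2) \<and> mono h \<longrightarrow>
            d_eq h (\<lambda>n. h (2 * n)) \<and> b_eq h (\<lambda>n. h (2 * n)))
       \<and> (\<forall>a b :: real. a > 1 \<and> b > 1 \<longrightarrow>
            d_eq (dexp a) (dexp b) \<and> b_eq (dexp a) (dexp b))"
proof (intro conjI allI impI)
  fix h :: "nat \<Rightarrow> nat" assume "(\<forall>n. h n \<ge> 2) \<and> mono h"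
  then have "mono h" and ge2: "\<And>n. h n \<ge> 2" by auto
  have pos: "h n > 0" for n
    using ge2[of n] by linarith
  have le: "h n \<le> h (2 * n)" for n
    using \<open>mono h\<close> by (simp add: monoD)
  show "d_eq h (\<lambda>n. h (2 * n))"
    unfolding d_eq_def
    using d_le_double[OF \<open>mono h\<close>] d_le_mono_bound[of h "\<lambda>n. h (2 * n)", OF le] by blast
  show "b_eq h (\<lambda>n. h (2 * n))"
    unfolding b_eq_def
    using b_le_double[OF \<open>mono h\<close> pos] b_le_mono_bound[of h "\<lambda>n. h (2 * n)", OF le] by blast
next
  fix a b :: real assume "a > 1 \<and> b > 1"
  then show "d_eq (dexp a) (dexp b)" "b_eq (dexp a) (dexp b)"
    unfolding d_eq_def b_eq_def using dexp_le[of a b] dexp_le[of b a] by auto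
qed

end
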